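(* Let $\{z_n\}_{n\ge 0}$ be a sequence of positive real numbers satisfying $az_{n+1}=bz_n+cz_{n-1}$ for $n\ge 1$, where $a,b,c$ are positive constants. If $z_0z_2\ge z_1^2$, then $\{z_{2n}\}_{n\ge 0}$ is log-convex and $\{z_{2n+1}\}_{n\ge 0}$ is log-concave. If $z_0z_2\le z_1^2$, then $\{z_{2n}\}_{n\ge 0}$ is log-concave and $\{z_{2n+1}\}_{n\ge 0}$ is log-convex.
   Context: A sequence $a_0,a_1,\ldots$ of nonnegative reals is log-convex (resp. log-concave) if $a_{k-1}a_{k+1}\ge a_k^2$ (resp. $\le$) for all $k\ge 1$. *)

theory Defs
  imports Complex_Main
begin

definition log_convex :: "(nat \<Rightarrow> real) \<Rightarrow> bool" where
  "log_convex a \<longleftrightarrow> (\<forall>k. 0 \<le> a k) \<and> (\<forall>k\<ge>1. a (k - 1) * a (k + 1) \<ge> (a k)\<^sup>2)"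

definition log_concave :: "(nat \<Rightarrow> real) \<Rightarrow> bool" where
  "log_concave a \<longleftrightarrow> (\<forall>k. 0 \<le> a k) \<and> (\<forall>k\<ge>1. a (k - 1) * a (k + 1) \<le> (a k)\<^sup>2)"

end

theory Submission
  imports Defs
begin

(* Write D n = z n * z (n + 2) - (z (n + 1))^2 for the Turan expression. The recurrence gives
   a * D (n + 1) = - c * D n, so D alternates in sign starting from D 0, and also
   a^2 * (z n * z (n + 4) - (z (n + 2))^2) = b^2 * D n. Hence the Turan expressions of the
   even and odd bisections have the signs of D 0 and - D 0 respectively. *)

definition turan :: "(nat \<Rightarrow> 'a::comm_ring_1) \<Rightarrow> nat \<Rightarrow> 'a" where
  "turan x n = x n * x (n + 2) - (x (n + 1))\<^sup>2"

lemma all_ge_1_iff_all_Suc: "(\<forall>k\<ge>1. P k) \<longleftrightarrow> (\<forall>n. P (Suc n))"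
  by (auto dest: Suc_le_D)

lemma log_convex_iff_turan_nonneg:
  "log_convex x \<longleftrightarrow> (\<forall>k. 0 \<le> x k) \<and> (\<forall>n. 0 \<le> turan x n)"
  unfolding log_convex_def turan_def all_ge_1_iff_all_Suc
  by (simp add: numeral_2_eq_2)

lemma log_concave_iff_turan_nonpos:
  "log_concave x \<longleftrightarrow> (\<forall>k. 0 \<le> x k) \<and> (\<forall>n. turan x n \<le> 0)"
  unfolding log_concave_def turan_def all_ge_1_iff_all_Suc
  by (simp add: numeral_2_eq_2)

context
  fixes z :: "nat \<Rightarrow> 'a::comm_ring_1" and a b c :: 'a
  assumes rec: "\<And>n. a * z (n + 2) = b * z (n + 1) + c * z n"
begin

lemma recurrence_shifted:
  "a * z (n + 3) = b * z (n + 2) + c * z (n + 1)"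
  "a * z (n + 4) = b * z (n + 3) + c * z (n + 2)"
  using rec[of "n + 1"] rec[of "n + 2"] by (simp_all add: eval_nat_numeral)

lemma turan_Suc: "a * turan z (n + 1) = - c * turan z n"
proof -
  have "a * turan z (n + 1) = z (n + 1) * (a * z (n + 3)) - z (n + 2) * (a * z (n + 2))"
    by (simp add: turan_def algebra_simps power2_eq_square eval_nat_numeral)
  also have "\<dots> = z (n + 1) * (b * z (n + 2) + c * z (n + 1))
      - z (n + 2) * (b * z (n + 1) + c * z n)"
    by (simp only: rec recurrence_shifted)
  also have "\<dots> = - c * turan z n"
    by (simp add: turan_def algebra_simps power2_eq_square)
  finally show ?thesis .
qed

lemma turan_bisection:
  "a\<^sup>2 * turan (\<lambda>k. z (2 * k + r)) m = b\<^sup>2 * turan z (2 * m + r)"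
proof -
  define n where "n = 2 * m + r"
  have bisected: "turan (\<lambda>k. z (2 * k + r)) m = z n * z (n + 4) - (z (n + 2))\<^sup>2"
    by (simp add: turan_def n_def algebra_simps eval_nat_numeral)
  have "a\<^sup>2 * z (n + 4) = a * (a * z (n + 4))"
    by (simp add: power2_eq_square)
  also have "\<dots> = b * (a * z (n + 3)) + a * c * z (n + 2)"
    by (simp only: recurrence_shifted(2)) (simp add: algebra_simps)
  also have "\<dots> = (b\<^sup>2 + a * c) * z (n + 2) + b * c * z (n + 1)"
    by (simp only: recurrence_shifted(1)) (simp add: algebra_simps power2_eq_square)
  finally have z4: "a\<^sup>2 * z (n + 4) = (b\<^sup>2 + a * c) * z (n + 2) + b * c * z (n + 1)" .
  have "a\<^sup>2 * turan (\<lambda>k. z (2 * k + r)) m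
      = z n * (a\<^sup>2 * z (n + 4)) - (a * z (n + 2)) * (a * z (n + 2))"
    unfolding bisected by (simp add: power2_eq_square algebra_simps)
  also have "\<dots> = z n * ((b\<^sup>2 + a * c) * z (n + 2) + b * c * z (n + 1))
      - a * z (n + 2) * (b * z (n + 1) + c * z n)"
    using rec[of n] by (simp only: z4)
  also have "\<dots> = b\<^sup>2 * z n * z (n + 2) - b * z (n + 1) * (a * z (n + 2) - c * z n)"
    by (simp add: power2_eq_square algebra_simps)
  also have "\<dots> = b\<^sup>2 * turan z n"
    by (simp only: rec add_diff_cancel_right) (simp add: turan_def power2_eq_square algebra_simps)
  finally show ?thesis
    by (simp add: n_def)
qed
end

lemma turan_closed_form:
  fixes z :: "nat \<Rightarrow> 'a::field"
  assumes rec: "\<And>n. a * z (n + 2) = b * z (n + 1) + c * z n" and "a \<noteq> 0"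
  shows "turan z n = (- c / a) ^ n * turan z 0"
proof (induction n)
  case (Suc n)
  have "turan z (n + 1) = - c / a * turan z n"
    using turan_Suc[OF rec, of n] \<open>a \<noteq> 0\<close>
    by (metis nonzero_mult_div_cancel_left times_divide_eq_left)
  then show ?case
    using Suc.IH by simp
qed simp

lemma sgn_turan_bisection:
  fixes z :: "nat \<Rightarrow> 'a::linordered_field" and a b c :: 'a
  assumes rec: "\<And>n. a * z (n + 2) = b * z (n + 1) + c * z n"
    and "a > 0" "b \<noteq> 0" "c > 0"
  shows "sgn (turan (\<lambda>k. z (2 * k + r)) m) = (- 1) ^ r * sgn (turan z 0)"
proof -
  have "a \<noteq> 0"
    using \<open>a > 0\<close> by simp
  have factor_pos: "0 < (b / a)\<^sup>2 * (c / a) ^ (2 * m + r)"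
    using assms by simp
  have "turan (\<lambda>k. z (2 * k + r)) m = (b / a)\<^sup>2 * turan z (2 * m + r)"
    using turan_bisection[OF rec, of r m] \<open>a \<noteq> 0\<close>
    by (simp add: power_divide divide_simps ac_simps)
  also have "\<dots> = (b / a)\<^sup>2 * (c / a) ^ (2 * m + r) * ((- 1) ^ r * turan z 0)"
    unfolding turan_closed_form[OF rec \<open>a \<noteq> 0\<close>, of "2 * m + r"]
    by (simp add: power_minus' power_add power_mult)
  also have "sgn \<dots> = sgn ((b / a)\<^sup>2 * (c / a) ^ (2 * m + r)) * sgn ((- 1) ^ r * turan z 0)"
    by (rule sgn_mult)
  also have "\<dots> = (- 1) ^ r * sgn (turan z 0)"
    unfolding sgn_pos[OF factor_pos] by (simp add: sgn_mult)
  finally show ?thesis .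
qed

theorem corollary3p17:
  fixes z :: "nat \<Rightarrow> real" and a b c :: real
  assumes pos: "\<And>n. z n > 0"
    and abc: "a > 0" "b > 0" "c > 0"
    and rec: "\<And>n. n \<ge> 1 \<Longrightarrow> a * z (n + 1) = b * z n + c * z (n - 1)"
  shows "(z 0 * z 2 \<ge> (z 1)\<^sup>2 \<longrightarrow>
            log_convex (\<lambda>n. z (2 * n)) \<and> log_concave (\<lambda>n. z (2 * n + 1)))
       \<and> (z 0 * z 2 \<le> (z 1)\<^sup>2 \<longrightarrow>
            log_concave (\<lambda>n. z (2 * n)) \<and> log_convex (\<lambda>n. z (2 * n + 1)))"
proof -
  have rec': "a * z (n + 2) = b * z (n + 1) + c * z n" for n
    using rec[of "n + 1"] by (simp add: add.assoc)
  have turan_0: "turan z 0 = z 0 * z 2 - (z 1)\<^sup>2"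
    by (simp add: turan_def numeral_2_eq_2)
  have bisection: "sgn (turan (\<lambda>k. z (2 * k + r)) m) = (- 1) ^ r * sgn (turan z 0)" for r m
    using sgn_turan_bisection[OF rec'] abc by simp
  have even: "sgn (turan (\<lambda>k. z (2 * k)) m) = sgn (turan z 0)" for m
    using bisection[of 0 m] by simp
  have odd: "sgn (turan (\<lambda>k. z (2 * k + 1)) m) = - sgn (turan z 0)" for m
    using bisection[of 1 m] by simp
  have "0 \<le> turan (\<lambda>k. z (2 * k)) m \<longleftrightarrow> 0 \<le> turan z 0"
    "turan (\<lambda>k. z (2 * k)) m \<le> 0 \<longleftrightarrow> turan z 0 \<le> 0"
    "0 \<le> turan (\<lambda>k. z (2 * k + 1)) m \<longleftrightarrow> turan z 0 \<le> 0"
    "turan (\<lambda>k. z (2 * k + 1)) m \<le> 0 \<longleftrightarrow> 0 \<le> turan z 0" for m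
    using even[of m] odd[of m] by (auto simp: sgn_if split: if_splits)
  then show ?thesis
    unfolding log_convex_iff_turan_nonneg log_concave_iff_turan_nonpos
    using pos by (simp add: turan_0 less_imp_le)
qed

end
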